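(* Let $\underline x\le0$, $\alpha_0\in(0,1)$, $\delta>0$, $\Gamma_1\in\mathbb R$, $\Lambda_1>0$. Let $\xi$ be a real random variable with law $\mu\in\mathcal P_2(\mathbb R)$ satisfying $E|\xi-\underline x|^{-2}<\delta^{-2}$, let $\eta\sim N(0,1)$ be independent of $\xi$, and set $X=\underline x+(\xi-\underline x)e^{\Gamma_1+\sqrt{\Lambda_1}\eta}$ with distribution function $F_X$. Then there is exactly one $z\in\mathbb R$ with $F_X(z)=\alpha_0$.
   Context: $\mathcal P_2(\mathbb R)$ denotes the probability measures on $\mathbb R$ with finite second moment. In the paper $X=X^{t,\xi}_T$ is the terminal wealth under a deterministic proportional strategy, with $\Gamma_1=\Gamma_1(t)$, $\Lambda_1=\Lambda_1(t)$, and the condition on $\mu$ defines the set $\mathcal P^\delta_{\mathrm{MES}}$. *)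

theory Defs
  imports "HOL-Probability.Probability"
begin

text \<open>Inverse square distance with the convention that it is infinite at distance 0,
  so that the expectation of |xi - xl|^(-2) is infinite whenever xi = xl with positive probability.\<close>
definition inv_sq_dist :: "real \<Rightarrow> real \<Rightarrow> ennreal" where
  "inv_sq_dist xl y = (if y = xl then \<infinity> else ennreal (1 / \<bar>y - xl\<bar>^2))"

end

theory Submission
  imports Defs
begin

text \<open>
  For fixed \<open>y \<noteq> xl\<close> the map \<open>e \<mapsto> xl + (y - xl) exp (\<Gamma>1 + sqrt \<Lambda>1 e)\<close> is a continuous
  bijection of the real line onto the open half-line on the side of \<open>xl\<close> where \<open>y\<close> lies, and the
  normal law of \<open>\<eta>\<close> has the same null sets as Lebesgue measure. By independence and Fubini, an
  event \<open>X \<in> B\<close> is null iff almost every section of \<open>B\<close> under this map is Lebesgue-null.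
  Finiteness of the inverse-square moment gives \<open>\<xi> \<noteq> xl\<close> almost surely, so sections of points are
  at most singletons: the distribution function \<open>F\<close> of \<open>X\<close> is continuous and attains every value
  in \<open>(0, 1)\<close>. If \<open>F\<close> were constant on \<open>[z1, z2]\<close>, the interval \<open>(z1, z2)\<close> would miss almost
  every such half-line, so \<open>\<xi> - xl\<close> has almost surely one sign with \<open>(z1, z2)\<close> on the other side
  of \<open>xl\<close>, which forces \<open>F z2 = 0\<close> or \<open>F z1 = 1\<close>.
\<close>

lemma null_sets_density_nonzero:
  assumes "f \<in> borel_measurable M" and "\<And>x. x \<in> space M \<Longrightarrow> f x \<noteq> 0"
  shows "null_sets (density M f) = null_sets M"
proof (intro set_eqI iffI)
  fix A assume "A \<in> null_sets (density M f)"
  then have "A \<in> sets M" and "AE x in M. x \<in> A \<longrightarrow> f x = 0"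
    using assms(1) by (simp_all add: null_sets_density_iff)
  then show "A \<in> null_sets M"
    using assms(2) by (subst AE_iff_null_sets) (auto elim!: AE_mp intro!: AE_I2)
next
  fix A assume "A \<in> null_sets M"
  then show "A \<in> null_sets (density M f)"
    using assms(1) AE_not_in[of A M] by (auto simp: null_sets_density_iff elim!: AE_mp)
qed

lemma open_not_null_sets_lborel:
  fixes S :: "'a::euclidean_space set"
  assumes "open S" and "S \<noteq> {}"
  shows "S \<notin> null_sets lborel"
  using open_not_negligible[OF assms] null_sets_completionI[of S lborel]
  by (auto simp: negligible_iff_null_sets)

lemma (in prob_space) indep_var_pair_null_iff_AE_slice_null:
  assumes indep: "indep_var S \<xi> T \<eta>" and C: "C \<in> sets (S \<Otimes>\<^sub>M T)"
  shows "emeasure M {\<omega> \<in> space M. (\<xi> \<omega>, \<eta> \<omega>) \<in> C} = 0 \<longleftrightarrow>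
    (AE \<omega> in M. Pair (\<xi> \<omega>) -` C \<in> null_sets (distr M T \<eta>))"
proof -
  have [measurable]: "\<xi> \<in> measurable M S" "\<eta> \<in> measurable M T"
    and joint: "distr M S \<xi> \<Otimes>\<^sub>M distr M T \<eta> = distr M (S \<Otimes>\<^sub>M T) (\<lambda>\<omega>. (\<xi> \<omega>, \<eta> \<omega>))"
    using indep by (simp_all add: indep_var_distribution_eq)
  interpret T: sigma_finite_measure "distr M T \<eta>"
    by (simp add: prob_space_distr prob_space_imp_sigma_finite)
  have sets_prod: "sets (distr M S \<xi> \<Otimes>\<^sub>M distr M T \<eta>) = sets (S \<Otimes>\<^sub>M T)"
    by (rule sets_pair_measure_cong) simp_all
  have slice_measurable: "(\<lambda>y. emeasure (distr M T \<eta>) (Pair y -` C)) \<in> borel_measurable S"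
    using T.measurable_emeasure_Pair[of C S] C by simp
  have "emeasure M {\<omega> \<in> space M. (\<xi> \<omega>, \<eta> \<omega>) \<in> C}
      = emeasure (distr M (S \<Otimes>\<^sub>M T) (\<lambda>\<omega>. (\<xi> \<omega>, \<eta> \<omega>))) C"
    using C by (subst emeasure_distr) (auto intro!: arg_cong[where f="emeasure M"])
  also have "\<dots> = (\<integral>\<^sup>+ y. emeasure (distr M T \<eta>) (Pair y -` C) \<partial>distr M S \<xi>)"
    using C sets_prod by (simp add: joint[symmetric] T.emeasure_pair_measure_alt)
  finally have "emeasure M {\<omega> \<in> space M. (\<xi> \<omega>, \<eta> \<omega>) \<in> C} = 0 \<longleftrightarrow>
      (AE y in distr M S \<xi>. emeasure (distr M T \<eta>) (Pair y -` C) = 0)"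
    using slice_measurable by (simp add: nn_integral_0_iff_AE)
  also have "\<dots> \<longleftrightarrow> (AE \<omega> in M. emeasure (distr M T \<eta>) (Pair (\<xi> \<omega>) -` C) = 0)"
    using slice_measurable by (subst AE_distr_iff) auto
  finally show ?thesis
    using C by (simp add: null_sets_def)
qed

lemma (in real_distribution) ex_cdf_eq:
  assumes no_atoms: "\<And>z. measure M {z} = 0" and "0 < \<alpha>" and "\<alpha> < 1"
  shows "\<exists>z. cdf M z = \<alpha>"
proof -
  obtain a where a: "cdf M a < \<alpha>"
    using order_tendstoD(2)[OF cdf_lim_at_bot \<open>0 < \<alpha>\<close>] by (auto simp: eventually_at_bot_linorder)
  obtain b where b: "\<alpha> < cdf M b"
    using order_tendstoD(1)[OF cdf_lim_at_top_prob \<open>\<alpha> < 1\<close>] by (auto simp: eventually_at_top_linorder)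
  have "a \<le> b"
    using a b cdf_nondecreasing[of b a] by linarith
  moreover have "continuous_on {a..b} (cdf M)"
    using no_atoms by (simp add: isCont_cdf continuous_at_imp_continuous_on)
  ultimately show ?thesis
    using IVT'[of "cdf M" a \<alpha> b] a b by auto
qed

lemma AE_neq_of_nn_integral_inv_sq_dist_finite:
  assumes "\<xi> \<in> borel_measurable M" and "(\<integral>\<^sup>+ \<omega>. inv_sq_dist xl (\<xi> \<omega>) \<partial>M) < \<infinity>"
  shows "AE \<omega> in M. \<xi> \<omega> \<noteq> xl"
proof -
  have "AE \<omega> in M. inv_sq_dist xl (\<xi> \<omega>) \<noteq> \<infinity>"
    using assms by (intro nn_integral_PInf_AE) (auto simp: inv_sq_dist_def)
  then show ?thesis
    by (rule AE_mp) (auto simp: inv_sq_dist_def)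
qed

locale random_dilation = prob_space +
  fixes \<xi> \<eta> :: "'a \<Rightarrow> real" and f :: "real \<Rightarrow> ennreal" and xl g s :: real
  assumes \<xi>_measurable [measurable]: "\<xi> \<in> borel_measurable M"
    and AE_\<xi>_neq: "AE \<omega> in M. \<xi> \<omega> \<noteq> xl"
    and \<eta>_distributed: "distributed M lborel \<eta> f"
    and density_nonzero: "\<And>x. f x \<noteq> 0"
    and indep: "indep_var borel \<xi> borel \<eta>"
    and s_nonzero: "s \<noteq> 0"
begin

lemma \<eta>_measurable [measurable]: "\<eta> \<in> borel_measurable M"
  using distributed_measurable[OF \<eta>_distributed] by simp

lemma null_sets_distr_\<eta>: "null_sets (distr M borel \<eta>) = null_sets lborel"
proof -
  have "distr M borel \<eta> = distr M lborel \<eta>"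
    by (rule distr_cong) simp_all
  also have "\<dots> = density lborel f"
    by (rule distributed_distr_eq_density[OF \<eta>_distributed])
  finally show ?thesis
    using distributed_borel_measurable[OF \<eta>_distributed] density_nonzero
    by (simp add: null_sets_density_nonzero)
qed

definition dilate :: "real \<Rightarrow> real \<Rightarrow> real" where
  "dilate y e = xl + (y - xl) * exp (g + s * e)"

lemma borel_measurable_dilate [measurable (raw)]:
  assumes [measurable]: "u \<in> borel_measurable N" "v \<in> borel_measurable N"
  shows "(\<lambda>x. dilate (u x) (v x)) \<in> borel_measurable N"
  unfolding dilate_def by measurable

lemma isCont_dilate: "isCont (dilate y) e"
  unfolding dilate_def by (intro continuous_intros)

lemma dilate_eq_iff:
  assumes "y \<noteq> xl"
  shows "dilate y e = t \<longleftrightarrow> 0 < (t - xl) / (y - xl) \<and> e = (ln ((t - xl) / (y - xl)) - g) / s"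
proof -
  have "dilate y e = t \<longleftrightarrow> exp (g + s * e) = (t - xl) / (y - xl)"
    using assms by (auto simp: dilate_def field_simps)
  also have "\<dots> \<longleftrightarrow> 0 < (t - xl) / (y - xl) \<and> g + s * e = ln ((t - xl) / (y - xl))"
    by (metis exp_gt_zero exp_ln ln_exp)
  also have "\<dots> \<longleftrightarrow> 0 < (t - xl) / (y - xl) \<and> e = (ln ((t - xl) / (y - xl)) - g) / s"
    using s_nonzero by (auto simp: field_simps)
  finally show ?thesis .
qed

lemma dilate_gt_center: "xl < y \<Longrightarrow> xl < dilate y e"
  and dilate_lt_center: "y < xl \<Longrightarrow> dilate y e < xl"
  by (simp_all add: dilate_def mult_neg_pos)

lemma ex_dilate_between:
  assumes "z1 < z2" and "xl < y \<and> xl < z2 \<or> y < xl \<and> z1 < xl"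
  shows "\<exists>e. z1 < dilate y e \<and> dilate y e < z2"
proof -
  define t where "t = (if xl < y then (max z1 xl + z2) / 2 else (z1 + min z2 xl) / 2)"
  have "z1 < t" "t < z2" "0 < (t - xl) / (y - xl)"
    using assms by (auto simp: t_def divide_pos_pos divide_neg_neg)
  moreover have "y \<noteq> xl"
    using assms(2) by auto
  ultimately show ?thesis
    using dilate_eq_iff by metis
qed

lemma null_preimage_iff_AE_slice_null:
  assumes "B \<in> sets borel"
  shows "emeasure M {\<omega> \<in> space M. dilate (\<xi> \<omega>) (\<eta> \<omega>) \<in> B} = 0 \<longleftrightarrow>
    (AE \<omega> in M. dilate (\<xi> \<omega>) -` B \<in> null_sets lborel)"
proof -
  define C where "C = {p \<in> space (borel \<Otimes>\<^sub>M borel). dilate (fst p) (snd p) \<in> B}"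
  have C_sets: "C \<in> sets (borel \<Otimes>\<^sub>M borel)"
    using assms unfolding C_def by measurable
  have event_eq: "{\<omega> \<in> space M. (\<xi> \<omega>, \<eta> \<omega>) \<in> C} = {\<omega> \<in> space M. dilate (\<xi> \<omega>) (\<eta> \<omega>) \<in> B}"
    by (auto simp: C_def space_pair_measure)
  have slice_eq: "Pair y -` C = dilate y -` B" for y
    by (auto simp: C_def space_pair_measure)
  show ?thesis
    using indep_var_pair_null_iff_AE_slice_null[OF indep C_sets]
    unfolding event_eq slice_eq null_sets_distr_\<eta> .
qed

definition law :: "real measure" where
  "law = distr M borel (\<lambda>\<omega>. dilate (\<xi> \<omega>) (\<eta> \<omega>))"

sublocale law: real_distribution law
  unfolding law_def by (rule real_distribution_distr) simp

lemma measure_law: "B \<in> sets borel \<Longrightarrow> measure law B = prob {\<omega> \<in> space M. dilate (\<xi> \<omega>) (\<eta> \<omega>) \<in> B}"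
  unfolding law_def by (subst measure_distr) (auto intro!: arg_cong[where f = prob])

lemma cdf_law: "cdf law z = prob {\<omega> \<in> space M. dilate (\<xi> \<omega>) (\<eta> \<omega>) \<le> z}"
  by (simp add: cdf_def measure_law)

lemma measure_law_singleton: "measure law {z} = 0"
proof -
  have "AE \<omega> in M. dilate (\<xi> \<omega>) -` {z} \<in> null_sets lborel"
    using AE_\<xi>_neq
  proof (rule AE_mp, intro AE_I2 impI)
    fix \<omega> assume "\<xi> \<omega> \<noteq> xl"
    then have "dilate (\<xi> \<omega>) -` {z} \<subseteq> {(ln ((z - xl) / (\<xi> \<omega> - xl)) - g) / s}"
      using dilate_eq_iff by blast
    then show "dilate (\<xi> \<omega>) -` {z} \<in> null_sets lborel"
      by (meson finite.emptyI finite_imp_null_set_lborel finite_insert finite_subset)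
  qed
  then have "emeasure M {\<omega> \<in> space M. dilate (\<xi> \<omega>) (\<eta> \<omega>) \<in> {z}} = 0"
    using null_preimage_iff_AE_slice_null[of "{z}"] by simp
  then show ?thesis
    by (simp add: measure_law emeasure_eq_measure)
qed

lemma AE_sign_of_null_interval:
  assumes "z1 < z2"
    and "emeasure M {\<omega> \<in> space M. dilate (\<xi> \<omega>) (\<eta> \<omega>) \<in> {z1<..<z2}} = 0"
  shows "AE \<omega> in M. xl < \<xi> \<omega> \<and> z2 \<le> xl \<or> \<xi> \<omega> < xl \<and> xl \<le> z1"
proof -
  have "AE \<omega> in M. dilate (\<xi> \<omega>) -` {z1<..<z2} \<in> null_sets lborel"
    using assms(2) null_preimage_iff_AE_slice_null[of "{z1<..<z2}"] by simp
  with AE_\<xi>_neq show ?thesis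
  proof (eventually_elim)
    case (elim \<omega>)
    have "open (dilate (\<xi> \<omega>) -` {z1<..<z2})"
      by (intro continuous_open_vimage isCont_dilate) simp
    with elim(2) have "dilate (\<xi> \<omega>) -` {z1<..<z2} = {}"
      using open_not_null_sets_lborel by blast
    with elim(1) ex_dilate_between[OF assms(1), of "\<xi> \<omega>"] show ?case
      by fastforce
  qed
qed

lemma cdf_law_eq_imp_0_or_1:
  assumes "z1 < z2" and "cdf law z1 = cdf law z2"
  shows "cdf law z2 = 0 \<or> cdf law z1 = 1"
proof -
  have "prob {\<omega> \<in> space M. dilate (\<xi> \<omega>) (\<eta> \<omega>) \<in> {z1<..z2}} = 0"
    using law.cdf_diff_eq[OF \<open>z1 < z2\<close>] assms(2) by (simp add: measure_law)
  then have "emeasure M {\<omega> \<in> space M. dilate (\<xi> \<omega>) (\<eta> \<omega>) \<in> {z1<..z2}} = 0"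
    by (simp add: emeasure_eq_measure)
  then have "emeasure M {\<omega> \<in> space M. dilate (\<xi> \<omega>) (\<eta> \<omega>) \<in> {z1<..<z2}} = 0"
    by (rule emeasure_eq_0[rotated]) (auto, measurable)
  then have sign: "AE \<omega> in M. xl < \<xi> \<omega> \<and> z2 \<le> xl \<or> \<xi> \<omega> < xl \<and> xl \<le> z1"
    using AE_sign_of_null_interval[OF \<open>z1 < z2\<close>] by simp
  show ?thesis
  proof (cases "z2 \<le> xl")
    case True
    have "AE \<omega> in M. \<not> dilate (\<xi> \<omega>) (\<eta> \<omega>) \<le> z2"
      using sign
    proof eventually_elim
      case (elim \<omega>)
      with True \<open>z1 < z2\<close> show ?case
        using dilate_gt_center[of "\<xi> \<omega>" "\<eta> \<omega>"] by linarith
    qed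
    then show ?thesis
      by (simp add: cdf_law prob_Collect_eq_0)
  next
    case False
    have "AE \<omega> in M. dilate (\<xi> \<omega>) (\<eta> \<omega>) \<le> z1"
      using sign
    proof eventually_elim
      case (elim \<omega>)
      with False show ?case
        using dilate_lt_center[of "\<xi> \<omega>" "\<eta> \<omega>"] by linarith
    qed
    then show ?thesis
      by (simp add: cdf_law prob_Collect_eq_1)
  qed
qed

theorem ex1_cdf_law_eq:
  assumes "0 < \<alpha>" and "\<alpha> < 1"
  shows "\<exists>!z. cdf law z = \<alpha>"
proof (rule ex_ex1I)
  show "\<exists>z. cdf law z = \<alpha>"
    using law.ex_cdf_eq measure_law_singleton assms by blast
next
  show "z1 = z2" if "cdf law z1 = \<alpha>" and "cdf law z2 = \<alpha>" for z1 z2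
    using that assms cdf_law_eq_imp_0_or_1[of z1 z2] cdf_law_eq_imp_0_or_1[of z2 z1]
    by (cases z1 z2 rule: linorder_cases) auto
qed

end

theorem lemma10:
  fixes M :: "'a measure" and \<xi> \<eta> :: "'a \<Rightarrow> real" and \<mu> :: "real measure"
    and xl \<alpha>0 \<delta> \<Gamma>1 \<Lambda>1 :: real
  assumes "prob_space M"
    and "xl \<le> 0" and "0 < \<alpha>0" and "\<alpha>0 < 1" and "\<delta> > 0" and "\<Lambda>1 > 0"
    and "\<xi> \<in> borel_measurable M" and "distr M borel \<xi> = \<mu>"
    and "integrable \<mu> (\<lambda>x. x ^ 2)"
    and "(\<integral>\<^sup>+ \<omega>. inv_sq_dist xl (\<xi> \<omega>) \<partial>M) < ennreal (1 / \<delta> ^ 2)"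
    and "distributed M lborel \<eta> std_normal_density"
    and "prob_space.indep_var M borel \<xi> borel \<eta>"
  shows "\<exists>!z::real. measure M {\<omega> \<in> space M.
           xl + (\<xi> \<omega> - xl) * exp (\<Gamma>1 + sqrt \<Lambda>1 * \<eta> \<omega>) \<le> z} = \<alpha>0"
proof -
  have "(\<integral>\<^sup>+ \<omega>. inv_sq_dist xl (\<xi> \<omega>) \<partial>M) < \<infinity>"
    using assms(10) by (rule order.strict_trans) simp
  then have "AE \<omega> in M. \<xi> \<omega> \<noteq> xl"
    using assms(7) by (rule AE_neq_of_nn_integral_inv_sq_dist_finite[rotated])
  moreover have "ennreal (std_normal_density x) \<noteq> 0" for x
    using normal_density_pos[of 1 0 x] by simp
  ultimately interpret random_dilation M \<xi> \<eta> "\<lambda>x. ennreal (std_normal_density x)" xl \<Gamma>1 "sqrt \<Lambda>1"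
    using assms(1,6,7,11,12)
    by (intro random_dilation.intro random_dilation_axioms.intro) simp_all
  show ?thesis
    using ex1_cdf_law_eq[OF \<open>0 < \<alpha>0\<close> \<open>\<alpha>0 < 1\<close>] by (simp add: cdf_law dilate_def)
qed

end
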